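(* Let $R$ be a partial algebra over a commutative ring $k\neq 0$ and let $f\colon R\to k$ be a morphism of partial $k$-algebras. Then for every $r\in R$, the element $r-f(r)\cdot 1\in R$ has no inverse. In particular, if $k$ is a field and $R=\mathrm{M}_n(k)$ (with its standard partial algebra structure), then $f(r)$ is an eigenvalue of $r$ for every $r\in R$.
   Context: A partial $k$-algebra is a set $R$ with a reflexive symmetric relation $\perp$ (commeasurability), partial operations $+,\cdot$ defined on pairs $a\perp b$, scalar multiplication $k\times R\to R$, and elements $0,1$ such that: every $a$ is commeasurable with $0$ and $1$; if $a_1,a_2,a_3$ are pairwise commeasurable and $\lambda\in k$ then $a_1+a_2$, $a_1a_2$, $\lambda a_1$ are commeasurable with $a_3$ (resp. $a_2$); for pairwise commeasurable $a_1,a_2,a_3$ the values of all commutative polynomials in them form a commutative $k$-algebra (so $r-\lambda\cdot 1$ is defined). A full $k$-algebra (such as $k$ or $\mathrm{M}_n(k)$) has the standard partial structure with $a\perp b$ iff $ab=ba$. A morphism $f\colon R\to S$ satisfies, for $a\perp b$, $\lambda\in k$: $f(a)\perp f(b)$, $f(\lambda a)=\lambda f(a)$, $f(a+b)=f(a)+f(b)$, $f(ab)=f(a)f(b)$, $f(0)=0$, $f(1)=1$. An inverse of $x\in R$ is an element $y$ with $x\perp y$ and $xy=1$. *)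

theory Defs
  imports "Jordan_Normal_Form.Char_Poly"
begin

text \<open>A partial k-algebra: carrier, commeasurability relation, partial operations
  (total HOL functions, only meaningful on commeasurable pairs of carrier elements),
  scalar multiplication, zero and one.\<close>

record ('k, 'a) palg =
  pcarrier :: "'a set"
  pcm :: "'a \<Rightarrow> 'a \<Rightarrow> bool"
  padd :: "'a \<Rightarrow> 'a \<Rightarrow> 'a"
  pmul :: "'a \<Rightarrow> 'a \<Rightarrow> 'a"
  psmul :: "'k \<Rightarrow> 'a \<Rightarrow> 'a"
  pzero :: "'a"
  pone :: "'a"

text \<open>Values of all commutative polynomials (with coefficients in k) in a1, a2, a3.\<close>

inductive_set pgen :: "('k, 'a) palg \<Rightarrow> 'a \<Rightarrow> 'a \<Rightarrow> 'a \<Rightarrow> 'a set"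
  for A a1 a2 a3 where
  g1: "a1 \<in> pgen A a1 a2 a3"
| g2: "a2 \<in> pgen A a1 a2 a3"
| g3: "a3 \<in> pgen A a1 a2 a3"
| g0: "pzero A \<in> pgen A a1 a2 a3"
| gone: "pone A \<in> pgen A a1 a2 a3"
| gadd: "x \<in> pgen A a1 a2 a3 \<Longrightarrow> y \<in> pgen A a1 a2 a3 \<Longrightarrow> padd A x y \<in> pgen A a1 a2 a3"
| gmul: "x \<in> pgen A a1 a2 a3 \<Longrightarrow> y \<in> pgen A a1 a2 a3 \<Longrightarrow> pmul A x y \<in> pgen A a1 a2 a3"
| gsmul: "x \<in> pgen A a1 a2 a3 \<Longrightarrow> psmul A c x \<in> pgen A a1 a2 a3"

definition comm_k_algebra_on :: "('k::comm_ring_1, 'a) palg \<Rightarrow> 'a set \<Rightarrow> bool" where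
  "comm_k_algebra_on A S \<longleftrightarrow>
     S \<subseteq> pcarrier A \<and>
     (\<forall>x\<in>S. \<forall>y\<in>S. pcm A x y) \<and>
     pzero A \<in> S \<and> pone A \<in> S \<and>
     (\<forall>x\<in>S. \<forall>y\<in>S. padd A x y \<in> S \<and> pmul A x y \<in> S) \<and>
     (\<forall>c. \<forall>x\<in>S. psmul A c x \<in> S) \<and>
     (\<forall>x\<in>S. \<forall>y\<in>S. \<forall>z\<in>S. padd A (padd A x y) z = padd A x (padd A y z)) \<and>
     (\<forall>x\<in>S. \<forall>y\<in>S. padd A x y = padd A y x) \<and>
     (\<forall>x\<in>S. padd A x (pzero A) = x) \<and>
     (\<forall>x\<in>S. \<exists>y\<in>S. padd A x y = pzero A) \<and>
     (\<forall>x\<in>S. \<forall>y\<in>S. \<forall>z\<in>S. pmul A (pmul A x y) z = pmul A x (pmul A y z)) \<and>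
     (\<forall>x\<in>S. \<forall>y\<in>S. pmul A x y = pmul A y x) \<and>
     (\<forall>x\<in>S. pmul A x (pone A) = x) \<and>
     (\<forall>x\<in>S. \<forall>y\<in>S. \<forall>z\<in>S. pmul A x (padd A y z) = padd A (pmul A x y) (pmul A x z)) \<and>
     (\<forall>c d. \<forall>x\<in>S. psmul A (c * d) x = psmul A c (psmul A d x)) \<and>
     (\<forall>c d. \<forall>x\<in>S. psmul A (c + d) x = padd A (psmul A c x) (psmul A d x)) \<and>
     (\<forall>c. \<forall>x\<in>S. \<forall>y\<in>S. psmul A c (padd A x y) = padd A (psmul A c x) (psmul A c y)) \<and>
     (\<forall>x\<in>S. psmul A 1 x = x) \<and>
     (\<forall>c. \<forall>x\<in>S. \<forall>y\<in>S. psmul A c (pmul A x y) = pmul A (psmul A c x) y)"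

definition partial_algebra :: "('k::comm_ring_1, 'a) palg \<Rightarrow> bool" where
  "partial_algebra A \<longleftrightarrow>
     pzero A \<in> pcarrier A \<and> pone A \<in> pcarrier A \<and>
     (\<forall>a\<in>pcarrier A. pcm A a a) \<and>
     (\<forall>a\<in>pcarrier A. \<forall>b\<in>pcarrier A. pcm A a b \<longrightarrow> pcm A b a) \<and>
     (\<forall>a\<in>pcarrier A. pcm A a (pzero A) \<and> pcm A a (pone A)) \<and>
     (\<forall>a b. a \<in> pcarrier A \<longrightarrow> b \<in> pcarrier A \<longrightarrow> pcm A a b \<longrightarrow>
        padd A a b \<in> pcarrier A \<and> pmul A a b \<in> pcarrier A) \<and>
     (\<forall>c. \<forall>a\<in>pcarrier A. psmul A c a \<in> pcarrier A) \<and>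
     (\<forall>a1\<in>pcarrier A. \<forall>a2\<in>pcarrier A. \<forall>a3\<in>pcarrier A. \<forall>c.
        pcm A a1 a2 \<and> pcm A a1 a3 \<and> pcm A a2 a3 \<longrightarrow>
          pcm A (padd A a1 a2) a3 \<and> pcm A (pmul A a1 a2) a3 \<and> pcm A (psmul A c a1) a2) \<and>
     (\<forall>a1\<in>pcarrier A. \<forall>a2\<in>pcarrier A. \<forall>a3\<in>pcarrier A.
        pcm A a1 a2 \<and> pcm A a1 a3 \<and> pcm A a2 a3 \<longrightarrow>
          comm_k_algebra_on A (pgen A a1 a2 a3))"

definition palg_hom :: "('k::comm_ring_1, 'a) palg \<Rightarrow> ('k, 'b) palg \<Rightarrow> ('a \<Rightarrow> 'b) \<Rightarrow> bool" where
  "palg_hom A B f \<longleftrightarrow>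
     (\<forall>a\<in>pcarrier A. f a \<in> pcarrier B) \<and>
     (\<forall>a\<in>pcarrier A. \<forall>b\<in>pcarrier A. pcm A a b \<longrightarrow>
        pcm B (f a) (f b) \<and> f (padd A a b) = padd B (f a) (f b) \<and>
        f (pmul A a b) = pmul B (f a) (f b)) \<and>
     (\<forall>c. \<forall>a\<in>pcarrier A. f (psmul A c a) = psmul B c (f a)) \<and>
     f (pzero A) = pzero B \<and> f (pone A) = pone B"

definition has_inverse :: "('k, 'a) palg \<Rightarrow> 'a \<Rightarrow> bool" where
  "has_inverse A x \<longleftrightarrow> (\<exists>y\<in>pcarrier A. pcm A x y \<and> pmul A x y = pone A)"

definition pminus_scalar :: "('k::comm_ring_1, 'a) palg \<Rightarrow> 'a \<Rightarrow> 'k \<Rightarrow> 'a" where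
  "pminus_scalar A r c = padd A r (psmul A (- c) (pone A))"

definition ring_palg :: "('k::comm_ring_1, 'k) palg" where
  "ring_palg = \<lparr> pcarrier = UNIV, pcm = (\<lambda>a b. a * b = b * a), padd = (+), pmul = (*),
                 psmul = (*), pzero = 0, pone = 1 \<rparr>"

definition mat_palg :: "nat \<Rightarrow> ('k::comm_ring_1, 'k mat) palg" where
  "mat_palg n = \<lparr> pcarrier = carrier_mat n n, pcm = (\<lambda>a b. a * b = b * a), padd = (+),
                  pmul = (*), psmul = (\<lambda>c a. c \<cdot>\<^sub>m a), pzero = 0\<^sub>m n n, pone = 1\<^sub>m n \<rparr>"

end

theory Submission
  imports Defs
begin

text \<open>A morphism f into k sends r - f(r)\<cdot>1 to 0, and it sends an inverse pair x, y to
  elements with f x * f y = 1. Hence an inverse of r - f(r)\<cdot>1 would give 0 * f y = 1 in k,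
  impossible when k \<noteq> 0. For M_n(k) the element r - f(r)\<cdot>1 is the characteristic matrix,
  which is invertible unless f(r) is an eigenvalue.\<close>

lemma palg_hom_ring_palg_dvd_one:
  assumes hom: "palg_hom R ring_palg f"
    and x: "x \<in> pcarrier R" and inv: "has_inverse R x"
  shows "f x dvd 1"
proof -
  obtain y where y: "y \<in> pcarrier R" "pcm R x y" "pmul R x y = pone R"
    using inv unfolding has_inverse_def by blast
  have "f x * f y = f (pmul R x y)"
    using hom x y(1,2) unfolding palg_hom_def ring_palg_def by simp
  also have "\<dots> = 1"
    using hom y(3) unfolding palg_hom_def ring_palg_def by simp
  finally show ?thesis by (metis dvdI)
qed

lemma palg_hom_ring_palg_pminus_scalar:
  assumes hom: "palg_hom R ring_palg f"
    and r: "r \<in> pcarrier R" and one: "pone R \<in> pcarrier R"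
    and s: "psmul R (- c) (pone R) \<in> pcarrier R"
    and cm: "pcm R r (psmul R (- c) (pone R))"
  shows "f (pminus_scalar R r c) = f r - c"
proof -
  have "f (pminus_scalar R r c) = f r + f (psmul R (- c) (pone R))"
    using hom r s cm unfolding palg_hom_def pminus_scalar_def ring_palg_def by simp
  also have "f (psmul R (- c) (pone R)) = - c"
    using hom one unfolding palg_hom_def ring_palg_def by simp
  finally show ?thesis by simp
qed

text \<open>Only the closure facts about r and 1 are assumed, so that M_n(k) can be handled
  without verifying the full partial algebra axioms for it.\<close>

lemma not_has_inverse_pminus_scalar_hom:
  assumes nontriv: "(0::'k::comm_ring_1) \<noteq> 1" and hom: "palg_hom R ring_palg f"
    and r: "r \<in> pcarrier R" and one: "pone R \<in> pcarrier R"
    and s: "psmul R (- f r) (pone R) \<in> pcarrier R"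
    and cm: "pcm R r (psmul R (- f r) (pone R))"
    and x: "pminus_scalar R r (f r) \<in> pcarrier R"
  shows "\<not> has_inverse R (pminus_scalar R r (f r))"
proof
  assume "has_inverse R (pminus_scalar R r (f r))"
  then have "f (pminus_scalar R r (f r)) dvd 1"
    using palg_hom_ring_palg_dvd_one[OF hom x] by blast
  moreover have "f (pminus_scalar R r (f r)) = 0"
    using palg_hom_ring_palg_pminus_scalar[OF hom r one s cm] by simp
  ultimately show False using nontriv by simp
qed

lemma partial_algebra_pone: "partial_algebra A \<Longrightarrow> pone A \<in> pcarrier A"
  by (simp add: partial_algebra_def)

lemma partial_algebra_pcm_refl: "partial_algebra A \<Longrightarrow> a \<in> pcarrier A \<Longrightarrow> pcm A a a"
  by (simp add: partial_algebra_def)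

lemma partial_algebra_pcm_sym:
  "partial_algebra A \<Longrightarrow> a \<in> pcarrier A \<Longrightarrow> b \<in> pcarrier A \<Longrightarrow> pcm A a b \<Longrightarrow> pcm A b a"
  by (simp add: partial_algebra_def)

lemma partial_algebra_pcm_pone: "partial_algebra A \<Longrightarrow> a \<in> pcarrier A \<Longrightarrow> pcm A a (pone A)"
  by (simp add: partial_algebra_def)

lemma partial_algebra_padd_closed:
  "partial_algebra A \<Longrightarrow> a \<in> pcarrier A \<Longrightarrow> b \<in> pcarrier A \<Longrightarrow> pcm A a b \<Longrightarrow>
    padd A a b \<in> pcarrier A"
  by (simp add: partial_algebra_def)

lemma partial_algebra_psmul_closed:
  "partial_algebra A \<Longrightarrow> a \<in> pcarrier A \<Longrightarrow> psmul A c a \<in> pcarrier A"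
  by (simp add: partial_algebra_def)

lemma partial_algebra_pcm_psmul:
  "partial_algebra A \<Longrightarrow> a1 \<in> pcarrier A \<Longrightarrow> a2 \<in> pcarrier A \<Longrightarrow> a3 \<in> pcarrier A \<Longrightarrow>
    pcm A a1 a2 \<Longrightarrow> pcm A a1 a3 \<Longrightarrow> pcm A a2 a3 \<Longrightarrow> pcm A (psmul A c a1) a2"
  unfolding partial_algebra_def by meson

text \<open>Commeasurability of r with c\<cdot>1 comes from the closure axiom applied to the
  pairwise commeasurable triple (1, r, r).\<close>

lemma partial_algebra_pcm_psmul_pone:
  assumes pa: "partial_algebra A" and r: "r \<in> pcarrier A"
  shows "pcm A r (psmul A c (pone A))"
proof -
  have one: "pone A \<in> pcarrier A" by (rule partial_algebra_pone[OF pa])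
  have "pcm A (pone A) r"
    using partial_algebra_pcm_sym[OF pa r one partial_algebra_pcm_pone[OF pa r]] .
  then have "pcm A (psmul A c (pone A)) r"
    using partial_algebra_pcm_psmul[OF pa one r r _ _ partial_algebra_pcm_refl[OF pa r]] by blast
  then show ?thesis
    using partial_algebra_pcm_sym[OF pa partial_algebra_psmul_closed[OF pa one] r] by blast
qed

lemma partial_algebra_not_has_inverse_pminus_scalar:
  assumes "(0::'k::comm_ring_1) \<noteq> 1" and pa: "partial_algebra (R :: ('k, 'a) palg)"
    and hom: "palg_hom R ring_palg f" and r: "r \<in> pcarrier R"
  shows "\<not> has_inverse R (pminus_scalar R r (f r))"
proof (rule not_has_inverse_pminus_scalar_hom[OF assms(1) hom r])
  show one: "pone R \<in> pcarrier R" by (rule partial_algebra_pone[OF pa])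
  show s: "psmul R (- f r) (pone R) \<in> pcarrier R" by (rule partial_algebra_psmul_closed[OF pa one])
  show cm: "pcm R r (psmul R (- f r) (pone R))" by (rule partial_algebra_pcm_psmul_pone[OF pa r])
  show "pminus_scalar R r (f r) \<in> pcarrier R"
    unfolding pminus_scalar_def by (rule partial_algebra_padd_closed[OF pa r s cm])
qed

lemma pminus_scalar_mat_palg:
  "A \<in> carrier_mat n n \<Longrightarrow> pminus_scalar (mat_palg n) A c = char_matrix A c"
  by (simp add: pminus_scalar_def mat_palg_def char_matrix_def)

lemma has_inverse_mat_palg_if_det_nonzero:
  fixes X :: "'f::field mat"
  assumes X: "X \<in> carrier_mat n n" and det: "det X \<noteq> 0"
  shows "has_inverse (mat_palg n) X"
proof -
  have "X \<in> Units (ring_mat TYPE('f) n n)" by (rule det_non_zero_imp_unit[OF X det])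
  then obtain B where B: "B \<in> carrier_mat n n" "X * B = 1\<^sub>m n" "B * X = 1\<^sub>m n"
    unfolding Units_def ring_mat_def by auto
  show ?thesis
    unfolding has_inverse_def mat_palg_def by (simp add: bexI[of _ B] B)
qed

lemma mat_palg_hom_eigenvalue:
  fixes f :: "'f::field mat \<Rightarrow> 'f"
  assumes hom: "palg_hom (mat_palg n) ring_palg f" and A: "A \<in> carrier_mat n n"
  shows "eigenvalue A (f A)"
proof (rule ccontr)
  assume "\<not> eigenvalue A (f A)"
  then have "has_inverse (mat_palg n) (pminus_scalar (mat_palg n) A (f A))"
    using has_inverse_mat_palg_if_det_nonzero[OF char_matrix_closed[OF A]] eigenvalue_det[OF A]
    by (simp add: pminus_scalar_mat_palg[OF A])
  moreover have "\<not> has_inverse (mat_palg n) (pminus_scalar (mat_palg n) A (f A))"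
  proof (rule not_has_inverse_pminus_scalar_hom[OF zero_neq_one hom])
    show "A \<in> pcarrier (mat_palg n)" "pone (mat_palg n) \<in> pcarrier (mat_palg n)"
      "psmul (mat_palg n) (- f A) (pone (mat_palg n)) \<in> pcarrier (mat_palg n)"
      using A by (simp_all add: mat_palg_def)
    have "A * (- f A \<cdot>\<^sub>m 1\<^sub>m n) = (- f A \<cdot>\<^sub>m 1\<^sub>m n) * A"
      using A by (simp add: mult_smult_distrib[OF A one_carrier_mat]
          mult_smult_assoc_mat[OF one_carrier_mat A])
    then show "pcm (mat_palg n) A (psmul (mat_palg n) (- f A) (pone (mat_palg n)))"
      by (simp add: mat_palg_def)
    show "pminus_scalar (mat_palg n) A (f A) \<in> pcarrier (mat_palg n)"
      using A by (simp add: pminus_scalar_def mat_palg_def)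
  qed
  ultimately show False by contradiction
qed

theorem lemma3p3:
  shows "(\<forall>(R :: ('k::comm_ring_1, 'a) palg) f.
            (0::'k) \<noteq> 1 \<and> partial_algebra R \<and> palg_hom R ring_palg f \<longrightarrow>
            (\<forall>r\<in>pcarrier R. \<not> has_inverse R (pminus_scalar R r (f r))))
       \<and> (\<forall>(n::nat) (f :: 'f::field mat \<Rightarrow> 'f).
            palg_hom (mat_palg n) ring_palg f \<longrightarrow>
            (\<forall>r\<in>carrier_mat n n. eigenvalue r (f r)))"
proof (intro conjI allI impI ballI)
  fix R :: "('k::comm_ring_1, 'a) palg" and f r
  assume "(0::'k) \<noteq> 1 \<and> partial_algebra R \<and> palg_hom R ring_palg f" and "r \<in> pcarrier R"
  then show "\<not> has_inverse R (pminus_scalar R r (f r))"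
    using partial_algebra_not_has_inverse_pminus_scalar[of R f r] by simp
next
  fix n and f :: "'f::field mat \<Rightarrow> 'f" and r :: "'f mat"
  assume "palg_hom (mat_palg n) ring_palg f" and "r \<in> carrier_mat n n"
  then show "eigenvalue r (f r)" by (rule mat_palg_hom_eigenvalue)
qed

end
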